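(* In Setting A, for every $\beta\ge0$ and every equilibrium state $\widehat\mu_\beta$ for $\beta\phi$ on $\Sigma_{234}$, one has $\widehat\mu_\beta([3])>0$.
   Context: Setting A. Fix an integer $L\ge1$ and reals $\alpha,\gamma,\delta,\varepsilon>0$. Let $\mathcal A=\{1,2,3,4,1_1,\dots,1_L\}$. Let $\Sigma\subset\mathcal A^{\mathbb N}$ be the one-sided subshift of finite type with allowed transitions: $a\to b$ for all $a,b\in\{1,1_1,\dots,1_L\}$; $1\to2$; $2\to1$, $2\to2$, $2\to3$; $3\to2$, $3\to3$, $3\to4$; $4\to3$, $4\to4$; $\sigma$ is the left shift, $[a]$ the cylinder $\{x_0=a\}$. The potential $\phi:\Sigma\to\mathbb R$ is: $\phi(x)=-\alpha$ if $x_0\in\{1,1_1,\dots,1_L\}$; if $x_0=2$, $\phi(x)=-\log\frac{n+1}{n}$ with $n=\min\{j\ge1:x_j\ne2\}$ ($\phi(222\cdots)=0$); if $x_0=3$, $\phi(x)=\gamma-\varepsilon\log\frac{n+1}{n}$ with $n=\min\{j\ge1:x_j=2\}$ ($\phi(x)=\gamma$ if no such $j$); if $x_0=4$, $\phi(x)=\gamma+\delta-\varepsilon\log\frac{n+1}{n}$ with the same $n$ ($\gamma+\delta$ if no such $j$). $\Sigma_{234}=\Sigma\cap\{2,3,4\}^{\mathbb N}$; an equilibrium state for $\beta\phi$ on $\Sigma_{234}$ is a $\sigma$-invariant probability supported on $\Sigma_{234}$ maximizing $h_\mu(\sigma)+\beta\int\phi\,d\mu$ among such measures. *)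

theory Defs
  imports "HOL-Probability.Probability"
begin

text \<open>Alphabet: S1 = symbol 1, S2, S3, S4 the symbols 2,3,4, and S1i i the symbol 1_i.\<close>
datatype sym = S1 | S2 | S3 | S4 | S1i nat

definition is_one :: "nat \<Rightarrow> sym \<Rightarrow> bool" where
  "is_one L a \<longleftrightarrow> a = S1 \<or> (\<exists>i. 1 \<le> i \<and> i \<le> L \<and> a = S1i i)"

definition alphabet :: "nat \<Rightarrow> sym set" where
  "alphabet L = {a. is_one L a} \<union> {S2, S3, S4}"

definition allowed :: "nat \<Rightarrow> sym \<Rightarrow> sym \<Rightarrow> bool" where
  "allowed L a b \<longleftrightarrow>
     (is_one L a \<and> is_one L b) \<or> (a = S1 \<and> b = S2) \<or>
     (a = S2 \<and> b \<in> {S1, S2, S3}) \<or> (a = S3 \<and> b \<in> {S2, S3, S4}) \<or>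
     (a = S4 \<and> b \<in> {S3, S4})"

definition SFT :: "nat \<Rightarrow> (nat \<Rightarrow> sym) set" where
  "SFT L = {x. (\<forall>n. x n \<in> alphabet L) \<and> (\<forall>n. allowed L (x n) (x (Suc n)))}"

definition SFT234 :: "nat \<Rightarrow> (nat \<Rightarrow> sym) set" where
  "SFT234 L = {x \<in> SFT L. \<forall>n. x n \<in> {S2, S3, S4}}"

definition shift :: "(nat \<Rightarrow> sym) \<Rightarrow> (nat \<Rightarrow> sym)" where
  "shift x = (\<lambda>n. x (Suc n))"

definition seq_space :: "(nat \<Rightarrow> sym) measure" where
  "seq_space = PiM UNIV (\<lambda>_. count_space UNIV)"

definition phi :: "real \<Rightarrow> real \<Rightarrow> real \<Rightarrow> real \<Rightarrow> (nat \<Rightarrow> sym) \<Rightarrow> real" where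
  "phi \<alpha> \<gamma> \<delta> \<epsilon> x =
    (let n2 = (LEAST j. 1 \<le> j \<and> x j \<noteq> S2);
         n3 = (LEAST j. 1 \<le> j \<and> x j = S2)
     in case x 0 of
       S2 \<Rightarrow> (if \<exists>j\<ge>1. x j \<noteq> S2 then - ln (real (n2 + 1) / real n2) else 0)
     | S3 \<Rightarrow> (if \<exists>j\<ge>1. x j = S2 then \<gamma> - \<epsilon> * ln (real (n3 + 1) / real n3) else \<gamma>)
     | S4 \<Rightarrow> (if \<exists>j\<ge>1. x j = S2 then \<gamma> + \<delta> - \<epsilon> * ln (real (n3 + 1) / real n3)
              else \<gamma> + \<delta>)
     | _ \<Rightarrow> - \<alpha>)"

definition finite_meas_partition :: "'a measure \<Rightarrow> 'a set set \<Rightarrow> bool" where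
  "finite_meas_partition M P \<longleftrightarrow> finite P \<and> P \<subseteq> sets M \<and> disjoint P \<and> \<Union>P = space M"

definition part_entropy :: "'a measure \<Rightarrow> 'a set set \<Rightarrow> real" where
  "part_entropy M P = (\<Sum>A\<in>P. - measure M A * ln (measure M A))"

definition join_part :: "'a measure \<Rightarrow> ('a \<Rightarrow> 'a) \<Rightarrow> 'a set set \<Rightarrow> nat \<Rightarrow> 'a set set" where
  "join_part M T P n =
     {(\<Inter>i<n. (T ^^ i) -` (f i)) \<inter> space M | f. \<forall>i<n. f i \<in> P} - {{}}"

definition entropy_part :: "'a measure \<Rightarrow> ('a \<Rightarrow> 'a) \<Rightarrow> 'a set set \<Rightarrow> real" where
  "entropy_part M T P = lim (\<lambda>n. part_entropy M (join_part M T P (Suc n)) / real (Suc n))"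

definition KS_entropy :: "'a measure \<Rightarrow> ('a \<Rightarrow> 'a) \<Rightarrow> ereal" where
  "KS_entropy M T = (SUP P \<in> {P. finite_meas_partition M P}. ereal (entropy_part M T P))"

definition inv_prob_234 :: "nat \<Rightarrow> (nat \<Rightarrow> sym) measure \<Rightarrow> bool" where
  "inv_prob_234 L M \<longleftrightarrow> sets M = sets seq_space \<and> prob_space M \<and>
     shift \<in> measurable M M \<and> distr M M shift = M \<and>
     SFT234 L \<in> sets M \<and> emeasure M (SFT234 L) = 1"

definition free_energy :: "real \<Rightarrow> ((nat \<Rightarrow> sym) \<Rightarrow> real) \<Rightarrow> (nat \<Rightarrow> sym) measure \<Rightarrow> ereal" where
  "free_energy \<beta> f M = KS_entropy M shift + ereal (\<beta> * integral\<^sup>L M f)"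

definition equilibrium_state_234 ::
    "nat \<Rightarrow> real \<Rightarrow> ((nat \<Rightarrow> sym) \<Rightarrow> real) \<Rightarrow> (nat \<Rightarrow> sym) measure \<Rightarrow> bool" where
  "equilibrium_state_234 L \<beta> f M \<longleftrightarrow> inv_prob_234 L M \<and>
     (\<forall>N. inv_prob_234 L N \<longrightarrow> free_energy \<beta> f N \<le> free_energy \<beta> f M)"

end

theory Submission
  imports Defs
begin

text \<open>If \<open>\<mu>[3] = 0\<close>, shift invariance makes \<open>\<mu>\<close> almost surely avoid the symbol 3 at every
  position, so it lives on the two fixed points \<open>2\<^sup>\<infinity>\<close> and \<open>4\<^sup>\<infinity>\<close>: its entropy vanishes and,
  as \<open>\<phi> \<le> \<gamma> + \<delta>\<close>, its free energy is at most \<open>\<beta>(\<gamma> + \<delta>)\<close>. The Bernoulli measure on \<open>{3,4}\<^sup>\<nat>\<close>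
  giving weight \<open>s\<close> to 3 has entropy \<open>H(s)\<close> and, since \<open>\<phi>\<close> carries no logarithmic correction
  away from the symbol 2, \<open>\<phi>\<close>-average \<open>\<gamma> + \<delta>(1 - s)\<close>. Its free energy is therefore larger
  as soon as \<open>H(s) > \<beta>\<delta>s\<close>, which holds for \<open>s = exp(-\<beta>\<delta>)/2\<close>.\<close>

section \<open>Entropy of measures with finite support\<close>

lemma minus_mult_ln_bounds:
  assumes "0 \<le> m" "m \<le> (1::real)"
  shows "0 \<le> - m * ln m" "- m * ln m \<le> 1"
proof -
  show "0 \<le> - m * ln m"
  proof (cases "m = 0")
    case False
    then have "ln m \<le> 0" using assms by simp
    then show ?thesis using assms by (simp add: mult_nonneg_nonpos)
  qed simp
  show "- m * ln m \<le> 1"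
  proof (cases "m = 0")
    case False
    then have m: "0 < m" using assms by simp
    have "- ln m \<le> 1/m - 1" using ln_le_minus_one[of "1/m"] m by (simp add: ln_div)
    then have "m * (- ln m) \<le> m * (1/m - 1)" using m by (intro mult_left_mono) auto
    also have "\<dots> = 1 - m" using m by (simp add: field_simps)
    finally show ?thesis using assms by simp
  qed simp
qed

lemma join_part_disjoint:
  assumes "disjoint P" "E1 \<in> join_part M T P n" "E2 \<in> join_part M T P n" "E1 \<noteq> E2"
  shows "E1 \<inter> E2 = {}"
proof -
  obtain f where f: "\<forall>i<n. f i \<in> P" "E1 = (\<Inter>i<n. (T ^^ i) -` (f i)) \<inter> space M"
    using assms(2) unfolding join_part_def by auto
  obtain g where g: "\<forall>i<n. g i \<in> P" "E2 = (\<Inter>i<n. (T ^^ i) -` (g i)) \<inter> space M"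
    using assms(3) unfolding join_part_def by auto
  have "\<exists>i<n. f i \<noteq> g i"
  proof (rule ccontr)
    assume "\<not> (\<exists>i<n. f i \<noteq> g i)"
    then have "(\<Inter>i<n. (T ^^ i) -` (f i)) = (\<Inter>i<n. (T ^^ i) -` (g i))" by auto
    then show False using f g assms(4) by simp
  qed
  then obtain i where i: "i < n" "f i \<noteq> g i" by blast
  then have "f i \<inter> g i = {}" using assms(1) f(1) g(1) by (auto simp: pairwise_def disjnt_def)
  moreover have "E1 \<subseteq> (T ^^ i) -` (f i)" "E2 \<subseteq> (T ^^ i) -` (g i)" using f g i by auto
  ultimately show ?thesis by blast
qed

text \<open>Only the atoms of positive measure contribute, and each of them must contain a point
  of \<open>S\<close>, distinct atoms distinct points.\<close>
lemma part_entropy_le_card_support: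
  assumes "prob_space M" and ae: "AE x in M. x \<in> S" and "finite S"
    and disj: "\<And>E1 E2. E1 \<in> J \<Longrightarrow> E2 \<in> J \<Longrightarrow> E1 \<noteq> E2 \<Longrightarrow> E1 \<inter> E2 = {}"
  shows "0 \<le> part_entropy M J" "part_entropy M J \<le> card S"
proof -
  interpret prob_space M by fact
  define h where "h E = - measure M E * ln (measure M E)" for E
  have h: "0 \<le> h E" "h E \<le> 1" for E unfolding h_def by (intro minus_mult_ln_bounds; simp)+
  define J' where "J' = {E \<in> J. measure M E \<noteq> 0}"
  have meets_S: "E \<inter> S \<noteq> {}" if "E \<in> J'" for E
  proof
    assume E: "E \<inter> S = {}"
    have m: "measure M E \<noteq> 0" using that by (simp add: J'_def)
    then have Es: "E \<in> sets M" using measure_notin_sets by blast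
    have "AE x in M. x \<notin> E" using ae E by (auto elim!: AE_mp)
    then have "emeasure M E = 0"
      using AE_iff_measurable[OF Es, of "\<lambda>x. x \<notin> E"] sets.sets_into_space[OF Es] by auto
    then show False using m by (simp add: emeasure_eq_measure)
  qed
  define c where "c E = (SOME x. x \<in> E \<inter> S)" for E
  have c: "c E \<in> E \<inter> S" if "E \<in> J'" for E
    using meets_S[OF that] unfolding c_def by (metis all_not_in_conv someI)
  have "inj_on c J'"
  proof (rule inj_onI)
    fix E1 E2 assume "E1 \<in> J'" "E2 \<in> J'" "c E1 = c E2"
    then have "E1 \<inter> E2 \<noteq> {}" using c by (metis IntD1 disjoint_iff)
    then show "E1 = E2" using disj \<open>E1 \<in> J'\<close> \<open>E2 \<in> J'\<close> unfolding J'_def by blast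
  qed
  then have card: "card J' \<le> card S"
    by (rule card_inj_on_le) (use c \<open>finite S\<close> in auto)
  show "0 \<le> part_entropy M J"
    unfolding part_entropy_def h_def[symmetric] by (simp add: h sum_nonneg)
  show "part_entropy M J \<le> card S"
  proof (cases "finite J")
    case True
    have "part_entropy M J = sum h J'"
      unfolding part_entropy_def h_def[symmetric] J'_def
      using True by (intro sum.mono_neutral_right) (auto simp: h_def)
    also have "\<dots> \<le> of_nat (card J') * 1" by (rule sum_bounded_above) (use h in auto)
    finally show ?thesis using card by linarith
  qed (simp add: part_entropy_def)
qed

lemma entropy_part_eq_0_if_finite_support:
  assumes "prob_space M" "AE x in M. x \<in> S" "finite S" "finite_meas_partition M P"
  shows "entropy_part M T P = 0"
proof -
  define u where "u n = part_entropy M (join_part M T P (Suc n)) / real (Suc n)" for n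
  have "disjoint P" using assms(4) by (simp add: finite_meas_partition_def)
  note bounds = part_entropy_le_card_support[OF assms(1-3) join_part_disjoint[OF this]]
  have lower: "0 \<le> u n" and upper: "u n \<le> card S / real (Suc n)" for n
    unfolding u_def using bounds by (auto intro: divide_right_mono)
  have bound_to_0: "(\<lambda>n. card S / real (Suc n)) \<longlonglongrightarrow> 0"
    using LIMSEQ_Suc[OF lim_const_over_n[of "real (card S)"]] by simp
  have "u \<longlonglongrightarrow> 0"
    by (rule tendsto_sandwich[OF always_eventually always_eventually tendsto_const bound_to_0])
      (use lower upper in blast)+
  then show ?thesis unfolding entropy_part_def u_def[symmetric] by (rule limI)
qed

lemma KS_entropy_le_0_if_finite_support:
  assumes "prob_space M" "AE x in M. x \<in> S" "finite S"
  shows "KS_entropy M T \<le> 0"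
  unfolding KS_entropy_def
  by (rule SUP_least) (simp add: entropy_part_eq_0_if_finite_support[OF assms] zero_ereal_def)


section \<open>The shift space and the potential\<close>

instance sym :: countable by countable_datatype

lemma space_seq_space [simp]: "space seq_space = UNIV"
  by (simp add: seq_space_def space_PiM)

lemma funpow_shift: "(shift ^^ i) x = (\<lambda>k. x (k + i))"
  by (induction i arbitrary: x) (auto simp: shift_def)

lemma position_in_sets: "{x. x n = a} \<in> sets seq_space"
proof -
  have "{x \<in> space seq_space. x n = a} \<in> sets seq_space"
    unfolding seq_space_def by measurable
  then show ?thesis by simp
qed

lemma SFT234_in_sets: "SFT234 L \<in> sets seq_space"
proof -
  have "{x \<in> space seq_space. \<forall>n. x n \<in> alphabet L \<and> allowed L (x n) (x (Suc n)) \<and>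
      x n \<in> {S2, S3, S4}} \<in> sets seq_space"
    unfolding seq_space_def by measurable
  moreover have "{x \<in> space seq_space. \<forall>n. x n \<in> alphabet L \<and> allowed L (x n) (x (Suc n)) \<and>
      x n \<in> {S2, S3, S4}} = SFT234 L"
    by (auto simp: SFT234_def SFT_def)
  ultimately show ?thesis by simp
qed

lemma phi_measurable: "phi a g d e \<in> borel_measurable seq_space"
proof -
  have "phi a g d e = (\<lambda>x.
     if x 0 = S2 then (if \<exists>j\<ge>1. x j \<noteq> S2
       then - ln (real ((LEAST j. 1 \<le> j \<and> x j \<noteq> S2) + 1) / real (LEAST j. 1 \<le> j \<and> x j \<noteq> S2))
       else 0)
     else if x 0 = S3 then (if \<exists>j\<ge>1. x j = S2
       then g - e * ln (real ((LEAST j. 1 \<le> j \<and> x j = S2) + 1) / real (LEAST j. 1 \<le> j \<and> x j = S2))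
       else g)
     else if x 0 = S4 then (if \<exists>j\<ge>1. x j = S2
       then g + d - e * ln (real ((LEAST j. 1 \<le> j \<and> x j = S2) + 1) / real (LEAST j. 1 \<le> j \<and> x j = S2))
       else g + d)
     else - a)"
    by (rule ext, unfold phi_def Let_def, case_tac "x 0") simp_all
  also have "\<dots> \<in> borel_measurable seq_space"
    unfolding seq_space_def by measurable
  finally show ?thesis .
qed

lemma phi_le:
  assumes "0 \<le> a" "0 \<le> g" "0 \<le> d" "0 \<le> e"
  shows "phi a g d e x \<le> g + d"
proof -
  have "0 \<le> ln (real (Suc n) / real n)" for n
    by (cases "n = 0") (auto intro!: ln_ge_zero simp: field_simps)
  moreover from this have "0 \<le> e * ln (real (Suc n) / real n)" for n
    using assms by simp
  ultimately show ?thesis using assms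
    unfolding phi_def Let_def
    by (cases "x 0") (auto simp del: of_nat_Suc intro: order_trans[of _ 0])
qed

lemma phi_eq_if_34:
  assumes "\<forall>n. x n \<in> {S3, S4}"
  shows "phi a g d e x = (if x 0 = S3 then g else g + d)"
proof -
  have "x j \<noteq> S2" for j using assms[rule_format, of j] by auto
  moreover have "x 0 = S3 \<or> x 0 = S4" using assms by auto
  ultimately show ?thesis by (auto simp: phi_def Let_def)
qed

lemma SFT234_avoiding_S3:
  assumes "x \<in> SFT234 L" "\<forall>n. x n \<noteq> S3"
  shows "x \<in> {\<lambda>_. S2, \<lambda>_. S4}"
proof -
  have x0: "x 0 = S2 \<or> x 0 = S4" using assms by (auto simp: SFT234_def)
  have "x n = x 0" for n
  proof (induction n)
    case (Suc n)
    have "allowed L (x n) (x (Suc n))" "x (Suc n) \<in> {S2, S3, S4}" "x (Suc n) \<noteq> S3"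
      using assms by (auto simp: SFT234_def SFT_def)
    with x0 Suc show ?case by (auto simp: allowed_def is_one_def)
  qed simp
  then have "x = (\<lambda>_. x 0)" by auto
  then show ?thesis using x0 by auto
qed

section \<open>Invariant measures not charging the symbol 3\<close>

lemma measure_S3_at_eq:
  assumes "inv_prob_234 L \<mu>"
  shows "measure \<mu> {x. x n = S3} = measure \<mu> {x. x 0 = S3}"
proof (induction n)
  case (Suc n)
  have sets: "sets \<mu> = sets seq_space" and shift: "shift \<in> measurable \<mu> \<mu>"
    and invariant: "distr \<mu> \<mu> shift = \<mu>"
    using assms by (auto simp: inv_prob_234_def)
  have "{x. x (Suc n) = S3} = shift -` {x. x n = S3} \<inter> space \<mu>"
    using sets_eq_imp_space_eq[OF sets] by (auto simp: shift_def)
  then have "measure \<mu> {x. x (Suc n) = S3} = measure (distr \<mu> \<mu> shift) {x. x n = S3}"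
    using position_in_sets sets by (simp add: measure_distr[OF shift])
  then show ?case using invariant Suc by simp
qed simp

lemma AE_constant_if_S3_null:
  assumes inv: "inv_prob_234 L \<mu>" and null: "measure \<mu> {x. x 0 = S3} = 0"
  shows "AE x in \<mu>. x \<in> {\<lambda>_. S2, \<lambda>_. S4}"
proof -
  interpret prob_space \<mu> using inv by (simp add: inv_prob_234_def)
  have sets: "sets \<mu> = sets seq_space" using inv by (simp add: inv_prob_234_def)
  have "AE x in \<mu>. x \<in> SFT234 L"
    using inv by (intro AE_prob_1) (simp add: inv_prob_234_def emeasure_eq_measure)
  moreover have "AE x in \<mu>. x n \<noteq> S3" for n
    using measure_S3_at_eq[OF inv, of n] null position_in_sets[of n S3] sets
      sets_eq_imp_space_eq[OF sets]
    by (intro AE_I'[of "{x. x n = S3}"]) (auto simp: emeasure_eq_measure)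
  then have "AE x in \<mu>. \<forall>n. x n \<noteq> S3" by (simp add: AE_all_countable)
  ultimately show ?thesis by eventually_elim (rule SFT234_avoiding_S3)
qed

lemma free_energy_le_if_S3_null:
  assumes "inv_prob_234 L \<mu>" "measure \<mu> {x. x 0 = S3} = 0"
    and "0 \<le> \<beta>" "0 \<le> \<alpha>" "0 \<le> \<gamma>" "0 \<le> \<delta>" "0 \<le> \<epsilon>"
  shows "free_energy \<beta> (phi \<alpha> \<gamma> \<delta> \<epsilon>) \<mu> \<le> ereal (\<beta> * (\<gamma> + \<delta>))"
proof -
  interpret prob_space \<mu> using assms(1) by (simp add: inv_prob_234_def)
  have "KS_entropy \<mu> shift \<le> 0"
    by (rule KS_entropy_le_0_if_finite_support[OF prob_space_axioms
          AE_constant_if_S3_null[OF assms(1,2)]]) simp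
  moreover have "integral\<^sup>L \<mu> (phi \<alpha> \<gamma> \<delta> \<epsilon>) \<le> \<gamma> + \<delta>"
  proof (cases "integrable \<mu> (phi \<alpha> \<gamma> \<delta> \<epsilon>)")
    case True
    then have "integral\<^sup>L \<mu> (phi \<alpha> \<gamma> \<delta> \<epsilon>) \<le> integral\<^sup>L \<mu> (\<lambda>_. \<gamma> + \<delta>)"
      by (intro integral_mono) (use phi_le assms in auto)
    then show ?thesis by (simp add: prob_space)
  qed (use assms in \<open>simp add: not_integrable_integral_eq\<close>)
  then have "ereal (\<beta> * integral\<^sup>L \<mu> (phi \<alpha> \<gamma> \<delta> \<epsilon>)) \<le> ereal (\<beta> * (\<gamma> + \<delta>))"
    using assms(3) by (simp add: mult_left_mono)
  ultimately show ?thesis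
    unfolding free_energy_def by (metis add.left_neutral add_mono)
qed

section \<open>Bernoulli measures on \<open>{3,4}\<^sup>\<nat>\<close>\<close>

definition coin_34 :: "real \<Rightarrow> sym pmf" where
  "coin_34 s = map_pmf (\<lambda>b. if b then S3 else S4) (bernoulli_pmf s)"

definition bernoulli_34 :: "real \<Rightarrow> (nat \<Rightarrow> sym) measure" where
  "bernoulli_34 s = PiM UNIV (\<lambda>_. measure_pmf (coin_34 s))"

lemma sets_bernoulli_34: "sets (bernoulli_34 s) = sets seq_space"
  unfolding bernoulli_34_def seq_space_def by (rule sets_PiM_cong) auto

lemma space_bernoulli_34 [simp]: "space (bernoulli_34 s) = UNIV"
  unfolding bernoulli_34_def by (simp add: space_PiM)

lemma prob_space_bernoulli_34: "prob_space (bernoulli_34 s)"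
  unfolding bernoulli_34_def by (intro prob_space_PiM measure_pmf.prob_space_axioms)

lemma shift_measurable_bernoulli_34: "shift \<in> measurable (bernoulli_34 s) (bernoulli_34 s)"
  unfolding bernoulli_34_def shift_def
  by (rule measurable_PiM_single') (auto intro: measurable_component_singleton simp: space_PiM)

lemma distr_shift_bernoulli_34: "distr (bernoulli_34 s) (bernoulli_34 s) shift = bernoulli_34 s"
proof -
  have "(\<lambda>\<omega>. \<lambda>n\<in>UNIV. \<omega> (Suc n)) = shift" by (auto simp: shift_def fun_eq_iff)
  moreover have "distr (PiM UNIV (\<lambda>_. measure_pmf (coin_34 s)))
      (PiM UNIV (\<lambda>_. measure_pmf (coin_34 s))) (\<lambda>\<omega>. \<lambda>n\<in>UNIV. \<omega> (Suc n))
    = PiM UNIV (\<lambda>_. measure_pmf (coin_34 s))"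
    by (rule distr_PiM_reindex) (auto intro: measure_pmf.prob_space_axioms)
  ultimately show ?thesis unfolding bernoulli_34_def by simp
qed

lemma AE_bernoulli_34: "AE x in bernoulli_34 s. \<forall>n. x n \<in> {S3, S4}"
proof -
  have "set_pmf (coin_34 s) \<subseteq> {S3, S4}" unfolding coin_34_def by auto
  then have "AE x in bernoulli_34 s. x n \<in> {S3, S4}" for n
    unfolding bernoulli_34_def
    by (intro AE_PiM_component) (auto intro: measure_pmf.prob_space_axioms simp: AE_measure_pmf_iff)
  then show ?thesis by (simp add: AE_all_countable)
qed

lemma inv_prob_234_bernoulli_34: "inv_prob_234 L (bernoulli_34 s)"
proof -
  have S: "SFT234 L \<in> sets (bernoulli_34 s)" using SFT234_in_sets sets_bernoulli_34 by metis
  have "\<forall>n. x n \<in> {S3, S4} \<Longrightarrow> x \<in> SFT234 L" for x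
    unfolding SFT234_def SFT_def alphabet_def allowed_def by fastforce
  then have "emeasure (bernoulli_34 s) (SFT234 L) = 1"
    by (intro prob_space.emeasure_eq_1_AE[OF prob_space_bernoulli_34 S])
      (auto intro: AE_mp[OF AE_bernoulli_34])
  then show ?thesis
    unfolding inv_prob_234_def
    using S sets_bernoulli_34 prob_space_bernoulli_34 shift_measurable_bernoulli_34
      distr_shift_bernoulli_34 by auto
qed

definition coin_weight :: "real \<Rightarrow> bool \<Rightarrow> real" where
  "coin_weight s b = (if b then s else 1 - s)"

definition word_weight :: "real \<Rightarrow> bool list \<Rightarrow> real" where
  "word_weight s w = prod_list (map (coin_weight s) w)"

definition S3_cylinder :: "(nat \<Rightarrow> sym) set" where
  "S3_cylinder = {x. x 0 = S3}"

definition S3_pattern :: "bool list \<Rightarrow> (nat \<Rightarrow> sym) set" where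
  "S3_pattern w = {x. \<forall>i<length w. (x i = S3) = w ! i}"

lemma word_weight_nonneg: "0 \<le> s \<Longrightarrow> s \<le> 1 \<Longrightarrow> 0 \<le> word_weight s w"
  unfolding word_weight_def by (induction w) (auto simp: coin_weight_def)

lemma word_weight_pos: "0 < s \<Longrightarrow> s < 1 \<Longrightarrow> 0 < word_weight s w"
  unfolding word_weight_def by (induction w) (auto simp: coin_weight_def)

lemma sum_words_Suc:
  "(\<Sum>w | length w = Suc n. f w) = (\<Sum>b\<in>UNIV. \<Sum>w | length w = n. f (b # w))"
proof -
  have split: "{w. length w = Suc n} = (\<lambda>(b, w). b # w) ` (UNIV \<times> {w. length w = n})"
    by (auto simp: length_Suc_conv image_iff)
  have inj: "inj_on (\<lambda>(b, w). b # w) (UNIV \<times> {w. length w = n})"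
    by (auto simp: inj_on_def)
  have "(\<Sum>w | length w = Suc n. f w) = sum f ((\<lambda>(b, w). b # w) ` (UNIV \<times> {w. length w = n}))"
    by (simp only: split)
  also have "\<dots> = (\<Sum>p\<in>UNIV \<times> {w. length w = n}. f (fst p # snd p))"
    by (subst sum.reindex[OF inj]) (simp add: case_prod_beta)
  also have "\<dots> = (\<Sum>b\<in>UNIV. \<Sum>w | length w = n. f (b # w))"
    by (simp add: sum.cartesian_product case_prod_beta)
  finally show ?thesis .
qed

lemma sum_word_weight: "(\<Sum>w | length w = n. word_weight s w) = 1"
proof (induction n)
  case (Suc n)
  then show ?case
    by (simp add: sum_words_Suc word_weight_def sum_distrib_left[symmetric] UNIV_bool coin_weight_def)
qed (simp add: word_weight_def)

definition binary_entropy :: "real \<Rightarrow> real" where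
  "binary_entropy s = - s * ln s - (1 - s) * ln (1 - s)"

lemma word_weight_entropy:
  assumes "0 < s" "s < 1"
  shows "(\<Sum>w | length w = n. - word_weight s w * ln (word_weight s w)) = n * binary_entropy s"
proof (induction n)
  case 0 then show ?case by (simp add: word_weight_def)
next
  case (Suc n)
  let ?q = "coin_weight s" and ?p = "word_weight s"
  have "?q b \<noteq> 0" "?p w \<noteq> 0" for b w
    using assms word_weight_pos[OF assms, of w] by (auto simp: coin_weight_def)
  then have "(\<Sum>w | length w = Suc n. - ?p w * ln (?p w))
     = (\<Sum>b\<in>UNIV. \<Sum>w | length w = n. - (?q b * ?p w) * (ln (?q b) + ln (?p w)))"
    by (simp add: sum_words_Suc word_weight_def ln_mult)
  also have "\<dots> = (\<Sum>b\<in>UNIV. - ?q b * ln (?q b) * (\<Sum>w | length w = n. ?p w)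
        + ?q b * (\<Sum>w | length w = n. - ?p w * ln (?p w)))"
    by (intro sum.cong refl) (simp add: sum_distrib_left sum.distrib[symmetric] algebra_simps)
  also have "\<dots> = Suc n * binary_entropy s"
    using Suc by (simp add: sum_word_weight UNIV_bool coin_weight_def binary_entropy_def algebra_simps)
  finally show ?case .
qed

lemma measure_S3_pattern:
  assumes "0 \<le> s" "s \<le> 1"
  shows "measure (bernoulli_34 s) (S3_pattern w) = word_weight s w"
proof -
  let ?C = "\<lambda>i. if w ! i then {S3} else - {S3}"
  have "S3_pattern w = prod_emb UNIV (\<lambda>_. measure_pmf (coin_34 s)) {..<length w}
      (PiE {..<length w} ?C)"
    by (rule set_eqI) (simp add: prod_emb_iff S3_pattern_def PiE_iff extensional_def, blast)
  then have "emeasure (bernoulli_34 s) (S3_pattern w)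
      = (\<Prod>i<length w. emeasure (measure_pmf (coin_34 s)) (?C i))"
    unfolding bernoulli_34_def
    by (simp add: emeasure_PiM_emb measure_pmf.prob_space_axioms)
  also have "\<dots> = (\<Prod>i<length w. ennreal (coin_weight s (w ! i)))"
  proof (intro prod.cong refl)
    have "(\<lambda>b. if b then S3 else S4) -` {S3} = {True}" by (auto split: if_splits)
    then have "measure_pmf.prob (coin_34 s) {S3} = s"
      using assms by (simp add: coin_34_def measure_pmf_single pmf_map)
    then show "emeasure (measure_pmf (coin_34 s)) (?C i) = ennreal (coin_weight s (w ! i))" for i
      using measure_pmf.prob_compl[of "{S3}" "coin_34 s"]
      by (simp add: measure_pmf.emeasure_eq_measure coin_weight_def Compl_eq_Diff_UNIV)
  qed
  also have "\<dots> = ennreal (\<Prod>i<length w. coin_weight s (w ! i))"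
    using assms by (subst prod_ennreal) (auto simp: coin_weight_def)
  also have "(\<Prod>i<length w. coin_weight s (w ! i)) = word_weight s w"
    unfolding word_weight_def
    by (induction w) (simp_all add: prod.lessThan_Suc_shift del: prod.lessThan_Suc)
  finally show ?thesis
    using word_weight_nonneg[OF assms] by (simp add: measure_def)
qed

lemma S3_pattern_inj: "inj_on S3_pattern {w. length w = n}"
proof (rule inj_onI)
  fix v w assume "v \<in> {w. length w = n}" "w \<in> {w. length w = n}" "S3_pattern v = S3_pattern w"
  moreover have "(\<lambda>i. if i < length v \<and> v ! i then S3 else S4) \<in> S3_pattern v"
    by (auto simp: S3_pattern_def)
  ultimately show "v = w"
    by (intro nth_equalityI) (auto simp: S3_pattern_def split: if_splits)
qed

lemma S3_cylinder_in_sets: "S3_cylinder \<in> sets (bernoulli_34 s)"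
  using position_in_sets sets_bernoulli_34 by (simp add: S3_cylinder_def)

lemma INT_shift_preimage_S3_cylinder:
  assumes "\<forall>i<n. f i \<in> {S3_cylinder, - S3_cylinder}"
  shows "(\<Inter>i<n. (shift ^^ i) -` (f i)) = S3_pattern (map (\<lambda>i. f i = S3_cylinder) [0..<n])"
proof (rule set_eqI)
  fix x
  have "x \<in> (shift ^^ i) -` (f i) \<longleftrightarrow> (x i = S3) = (f i = S3_cylinder)" if "i < n" for i
  proof -
    have neq: "- S3_cylinder \<noteq> S3_cylinder" by (auto simp: S3_cylinder_def)
    have pre: "(shift ^^ i) y \<in> S3_cylinder \<longleftrightarrow> y i = S3" for y
      by (simp add: S3_cylinder_def funpow_shift)
    have "f i = S3_cylinder \<or> f i = - S3_cylinder" using assms that by auto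
    then show ?thesis using neq pre by (elim disjE) simp_all
  qed
  then show "x \<in> (\<Inter>i<n. (shift ^^ i) -` (f i)) \<longleftrightarrow> x \<in> S3_pattern (map (\<lambda>i. f i = S3_cylinder) [0..<n])"
    unfolding S3_pattern_def by (simp only: Inter_iff INT_iff) auto
qed

lemma join_part_S3_cylinder:
  "join_part (bernoulli_34 s) shift {S3_cylinder, - S3_cylinder} n = S3_pattern ` {w. length w = n}"
proof (rule set_eqI)
  fix E
  let ?P = "{S3_cylinder, - S3_cylinder}"
  show "E \<in> join_part (bernoulli_34 s) shift ?P n \<longleftrightarrow> E \<in> S3_pattern ` {w. length w = n}"
  proof
    assume "E \<in> join_part (bernoulli_34 s) shift ?P n"
    then obtain f where f: "\<forall>i<n. f i \<in> ?P" and E: "E = (\<Inter>i<n. (shift ^^ i) -` (f i))"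
      unfolding join_part_def by auto
    then show "E \<in> S3_pattern ` {w. length w = n}"
      using INT_shift_preimage_S3_cylinder[OF f] by auto
  next
    assume "E \<in> S3_pattern ` {w. length w = n}"
    then obtain w where w: "length w = n" "E = S3_pattern w" by auto
    define f where "f i = (if w ! i then S3_cylinder else - S3_cylinder)" for i
    have f: "\<forall>i<n. f i \<in> ?P" by (simp add: f_def)
    have "map (\<lambda>i. f i = S3_cylinder) [0..<n] = w"
      using w(1) by (intro nth_equalityI) (auto simp: f_def S3_cylinder_def)
    then have "E = (\<Inter>i<n. (shift ^^ i) -` (f i))"
      using INT_shift_preimage_S3_cylinder[OF f] w by simp
    moreover have "E \<noteq> {}"
      using w(2) by (auto simp: S3_pattern_def intro!: exI[of _ "\<lambda>i. if i < length w \<and> w ! i then S3 else S4"])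
    ultimately show "E \<in> join_part (bernoulli_34 s) shift ?P n"
      unfolding join_part_def using f by auto
  qed
qed

lemma KS_entropy_bernoulli_34_ge:
  assumes "0 < s" "s < 1"
  shows "binary_entropy s \<le> KS_entropy (bernoulli_34 s) shift"
proof -
  let ?P = "{S3_cylinder, - S3_cylinder}"
  have "part_entropy (bernoulli_34 s) (join_part (bernoulli_34 s) shift ?P n)
      = (\<Sum>w | length w = n. - word_weight s w * ln (word_weight s w))" for n
    unfolding part_entropy_def join_part_S3_cylinder
    using assms by (simp add: sum.reindex[OF S3_pattern_inj] measure_S3_pattern)
  then have "entropy_part (bernoulli_34 s) shift ?P = binary_entropy s"
    unfolding entropy_part_def word_weight_entropy[OF assms] by (simp del: of_nat_Suc)
  moreover have "finite_meas_partition (bernoulli_34 s) ?P"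
    using S3_cylinder_in_sets sets.compl_sets[OF S3_cylinder_in_sets]
    by (auto simp: finite_meas_partition_def pairwise_def disjnt_def Compl_eq_Diff_UNIV)
  ultimately show ?thesis
    unfolding KS_entropy_def by (metis (mono_tags) SUP_upper mem_Collect_eq)
qed

lemma integral_phi_bernoulli_34:
  assumes "0 \<le> s" "s \<le> 1"
  shows "integral\<^sup>L (bernoulli_34 s) (phi a g d e) = g + d * (1 - s)"
proof -
  interpret prob_space "bernoulli_34 s" by (rule prob_space_bernoulli_34)
  have S3: "S3_cylinder \<in> events" by (rule S3_cylinder_in_sets)
  then have S3_compl: "- S3_cylinder \<in> events"
    using sets.compl_sets[OF S3] by (simp add: Compl_eq_Diff_UNIV)
  have "measure (bernoulli_34 s) S3_cylinder = s"
    using measure_S3_pattern[OF assms, of "[True]"]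
    by (simp add: S3_pattern_def S3_cylinder_def word_weight_def coin_weight_def)
  then have "prob (- S3_cylinder) = 1 - s"
    using prob_compl[OF S3] by (simp add: Compl_eq_Diff_UNIV)
  moreover have "AE x in bernoulli_34 s. phi a g d e x = g + d * indicator (- S3_cylinder) x"
    using AE_bernoulli_34 by eventually_elim (simp add: phi_eq_if_34 S3_cylinder_def)
  then have "integral\<^sup>L (bernoulli_34 s) (phi a g d e)
      = integral\<^sup>L (bernoulli_34 s) (\<lambda>x. g + d * indicator (- S3_cylinder) x)"
    using phi_measurable[of a g d e]
    by (intro integral_cong_AE borel_measurable_add borel_measurable_times borel_measurable_const
        borel_measurable_indicator S3_compl) (simp_all add: measurable_cong_sets[OF sets_bernoulli_34 refl])
  moreover have "integrable (bernoulli_34 s) (indicator (- S3_cylinder) :: _ \<Rightarrow> real)"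
    using S3_compl by (intro integrable_real_indicator) (auto simp: emeasure_eq_measure)
  ultimately show ?thesis using prob_space by simp
qed

lemma binary_entropy_gt:
  assumes "0 \<le> c"
  shows "\<exists>s. 0 < s \<and> s < 1 \<and> c * s < binary_entropy s"
proof -
  define s where "s = exp (- c) / 2"
  have "0 < s" by (simp add: s_def)
  have "exp (- c) \<le> 1" using assms by simp
  then have "s < 1" unfolding s_def by linarith
  have ln_s: "ln s = - c - ln 2" by (simp add: s_def ln_div)
  have "- s * ln s = c * s + ln 2 * s" unfolding ln_s by (simp add: algebra_simps)
  moreover have "0 \<le> - (1 - s) * ln (1 - s)"
    using \<open>0 < s\<close> \<open>s < 1\<close> by (intro minus_mult_ln_bounds) auto
  moreover have "0 < ln 2 * s" using \<open>0 < s\<close> by simp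
  ultimately have "c * s < binary_entropy s" unfolding binary_entropy_def by linarith
  then show ?thesis using \<open>0 < s\<close> \<open>s < 1\<close> by blast
qed

theorem mainTheorem10:
  fixes L :: nat and \<alpha> \<gamma> \<delta> \<epsilon> \<beta> :: real and \<mu> :: "(nat \<Rightarrow> sym) measure"
  assumes "L \<ge> 1" and "\<alpha> > 0" and "\<gamma> > 0" and "\<delta> > 0" and "\<epsilon> > 0"
    and "\<beta> \<ge> 0"
    and "equilibrium_state_234 L \<beta> (phi \<alpha> \<gamma> \<delta> \<epsilon>) \<mu>"
  shows "measure \<mu> {x. x 0 = S3} > 0"
proof (rule ccontr)
  assume "\<not> measure \<mu> {x. x 0 = S3} > 0"
  then have null: "measure \<mu> {x. x 0 = S3} = 0"
    using measure_nonneg[of \<mu> "{x. x 0 = S3}"] by linarith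
  have inv: "inv_prob_234 L \<mu>" using assms(7) by (simp add: equilibrium_state_234_def)
  obtain s where s: "0 < s" "s < 1" "\<beta> * \<delta> * s < binary_entropy s"
    using binary_entropy_gt[of "\<beta> * \<delta>"] assms(4,6) by auto
  have "free_energy \<beta> (phi \<alpha> \<gamma> \<delta> \<epsilon>) \<mu> \<le> ereal (\<beta> * (\<gamma> + \<delta>))"
    using free_energy_le_if_S3_null[OF inv null] assms by simp
  also have "\<dots> < binary_entropy s + ereal (\<beta> * (\<gamma> + \<delta> * (1 - s)))"
    using s(3) by (simp add: algebra_simps)
  also have "\<dots> \<le> free_energy \<beta> (phi \<alpha> \<gamma> \<delta> \<epsilon>) (bernoulli_34 s)"
    unfolding free_energy_def integral_phi_bernoulli_34[OF less_imp_le[OF s(1)] less_imp_le[OF s(2)]]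
    using KS_entropy_bernoulli_34_ge[OF s(1,2)] by (intro add_right_mono)
  finally show False
    using assms(7) inv_prob_234_bernoulli_34 by (auto simp: equilibrium_state_234_def not_le[symmetric])
qed

end
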